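(* Let $m,n\in\mathbb{Z}^+$ be relatively prime, $\mathbb{H}_{m/n}=\{(z_1,z_2)\in\mathbb{C}^2:|z_1|^{m/n}<|z_2|<1\}$, and for $j\in\{0,1,\dots,m-1\}$ let $K_j$ be the sub-Bergman kernel defined below. Then for $(z,w)\in\mathbb{H}_{m/n}\times\mathbb{H}_{m/n}$, $$K_j(z,w)=\frac{n}{m\pi^2}\cdot\frac{f_j(s,t)\,g_j(t)\,s^j\,t^{\,n-1-E_j}}{(1-t)^2(t^n-s^m)^2},$$ where $s=z_1\bar w_1$, $t=z_2\bar w_2$, $E_j=\left\lfloor\frac{(j+1)n-1}{m}\right\rfloor$, and $$f_j(s,t)=(j+1)t^n+(m-j-1)s^m,\qquad g_j(t)=\left(j+1-\tfrac mnE_j\right)+\left(\tfrac mn+\tfrac mnE_j-j-1\right)t.$$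
   Context: Let $\mathcal{A}^2_{m/n}=\{(\alpha_1,\alpha_2)\in\mathbb{Z}^2:\alpha_1\ge0,\ n\alpha_1+m\alpha_2\ge -m-n+1\}$; these are exactly the $\alpha$ for which the monomial $z^\alpha=z_1^{\alpha_1}z_2^{\alpha_2}$ is holomorphic and square integrable (w.r.t. Lebesgue measure) on $\mathbb{H}_{m/n}$, and $\{z^\alpha\}_{\alpha\in\mathcal{A}^2_{m/n}}$ is an orthogonal basis of the Bergman space $A^2(\mathbb{H}_{m/n})$. For $j\in\{0,\dots,m-1\}$ let $\mathcal{G}_j=\{\alpha\in\mathcal{A}^2_{m/n}:\alpha_1\equiv j\pmod m\}$ and let $\mathcal{S}_j$ be the closed subspace of $A^2(\mathbb{H}_{m/n})$ spanned by $\{z^\alpha:\alpha\in\mathcal{G}_j\}$. The sub-Bergman kernel $K_j$ is the integral kernel of the orthogonal projection $L^2(\mathbb{H}_{m/n})\to\mathcal{S}_j$, namely $K_j(z,w)=\sum_{\alpha\in\mathcal{G}_j} z^\alpha\bar w^\alpha/\|z^\alpha\|^2_{L^2(\mathbb{H}_{m/n})}$. *)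

theory Defs
  imports "HOL-Analysis.Analysis"
begin

definition hartogs_H :: "nat \<Rightarrow> nat \<Rightarrow> (complex \<times> complex) set" where
  "hartogs_H m n = {z. cmod (fst z) powr (real m / real n) < cmod (snd z) \<and> cmod (snd z) < 1}"

definition adm_exps :: "nat \<Rightarrow> nat \<Rightarrow> (int \<times> int) set" where
  "adm_exps m n = {a. fst a \<ge> 0 \<and> int n * fst a + int m * snd a \<ge> - int m - int n + 1}"

definition exps_G :: "nat \<Rightarrow> nat \<Rightarrow> nat \<Rightarrow> (int \<times> int) set" where
  "exps_G m n j = {a \<in> adm_exps m n. fst a mod int m = int j}"

definition monom2 :: "int \<times> int \<Rightarrow> complex \<times> complex \<Rightarrow> complex" where
  "monom2 a z = fst z ^ nat (fst a) * snd z powi snd a"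

definition monom_norm_sq :: "nat \<Rightarrow> nat \<Rightarrow> int \<times> int \<Rightarrow> real" where
  "monom_norm_sq m n a =
     (\<integral> z. indicator (hartogs_H m n) z * (cmod (monom2 a z))\<^sup>2 \<partial>(lborel :: (complex \<times> complex) measure))"

definition sub_bergman :: "nat \<Rightarrow> nat \<Rightarrow> nat \<Rightarrow> complex \<times> complex \<Rightarrow> complex \<times> complex \<Rightarrow> complex" where
  "sub_bergman m n j z w =
     (\<Sum>\<^sub>\<infinity> a \<in> exps_G m n j.
        monom2 a z * cnj (monom2 a w) / complex_of_real (monom_norm_sq m n a))"

end

theory Submission
  imports Defs
begin

text \<open>
  Put \<open>u = |z\<^sub>1|\<^sup>2\<close> and \<open>v = |z\<^sub>2|\<^sup>2\<close>. Both the domain and \<open>|z\<^sup>\<alpha>|\<^sup>2\<close> depend only on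
  \<open>(u, v)\<close>, and \<open>z \<mapsto> |z|\<^sup>2\<close> pushes Lebesgue measure on \<open>\<complex>\<close> forward to \<open>\<pi>\<close> times Lebesgue
  measure on \<open>(0, \<infinity>)\<close>. Hence \<open>\<parallel>z\<^sup>\<alpha>\<parallel>\<^sup>2\<close> is \<open>\<pi>\<^sup>2\<close> times the integral of
  \<open>u\<^bsup>\<alpha>\<^sub>1\<^esup> v\<^bsup>\<alpha>\<^sub>2\<^esup>\<close> over \<open>u\<^bsup>m/n\<^esup> < v < 1\<close>, which is
  \<open>\<pi>\<^sup>2 m / ((\<alpha>\<^sub>1 + 1) (m (\<alpha>\<^sub>2 + 1) + n (\<alpha>\<^sub>1 + 1)))\<close>.
  The map \<open>(k, l) \<mapsto> (j + m k, l - n k - 1 - E\<^sub>j)\<close> is a bijection from \<open>\<nat>\<^sup>2\<close> onto \<open>G\<^sub>j\<close>,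
  and in these coordinates the terms of \<open>K\<^sub>j\<close> factor into
  \<open>(j + 1 + m k) (s\<^sup>m / t\<^sup>n)\<^sup>k\<close> times \<open>(n (j + 1) - m E\<^sub>j + m l) t\<^sup>l\<close>. On the domain
  \<open>|s\<^sup>m / t\<^sup>n| < 1\<close> and \<open>|t| < 1\<close>, so \<open>K\<^sub>j\<close> is a product of two arithmetico-geometric series
  \<open>\<Sum>\<^sub>k (c + d k) x\<^sup>k = (c + (d - c) x) / (1 - x)\<^sup>2\<close>, which gives the formula.
\<close>

section \<open>Radial integration on \<open>\<complex>\<close>\<close>

lemma emeasure_lborel_cmod_square_le:
  "emeasure lborel {z::complex. (cmod z)^2 \<le> c} = ennreal (pi * max c 0)"
proof (cases "c < 0")
  case True
  then have "{z::complex. (cmod z)^2 \<le> c} = {}"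
    by (auto dest: order_trans[OF zero_le_power2])
  with True show ?thesis
    by simp
next
  case False
  have le_sqrt_iff: "(cmod z)^2 \<le> c \<longleftrightarrow> cmod z \<le> sqrt c" for z
    by (subst real_sqrt_le_iff[symmetric]) simp
  have "{z::complex. (cmod z)^2 \<le> c} = cball 0 (sqrt c)"
    by (auto simp: dist_norm le_sqrt_iff)
  with False show ?thesis
    by (simp add: emeasure_cball unit_ball_vol_2)
qed

lemma measure_eqI_Ioc:
  fixes M N :: "real measure"
  assumes sets: "sets M = sets borel" "sets N = sets borel"
    and fin: "\<And>a b. emeasure M {a<..b} \<noteq> \<infinity>"
    and eq: "\<And>a b. emeasure M {a<..b} = emeasure N {a<..b}"
  shows "M = N"
proof (rule measure_eqI_generator_eq_countable[where E="range (\<lambda>(a, b). {a<..b})" and \<Omega>=UNIV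
      and A="range (\<lambda>n::nat. {- real n<..real n})"])
  have "{a<..b} \<inter> {c<..d} = {max a c<..min b d}" for a b c d :: real
    by auto
  then show "Int_stable (range (\<lambda>(a, b). {a<..b::real}))"
    by (auto simp: Int_stable_def)
  show "sets M = sigma_sets UNIV (range (\<lambda>(a, b). {a<..b::real}))"
    "sets N = sigma_sets UNIV (range (\<lambda>(a, b). {a<..b::real}))"
    using sets by (simp_all add: borel_sigma_sets_Ioc sets_measure_of)
  show "\<Union> (range (\<lambda>n::nat. {- real n<..real n})) = UNIV"
  proof (intro set_eqI iffI)
    fix x :: real
    obtain n :: nat where "\<bar>x\<bar> < n"
      using reals_Archimedean2 by blast
    then show "x \<in> \<Union> (range (\<lambda>n::nat. {- real n<..real n}))"
      by (auto intro!: exI[of _ n])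
  qed auto
  show "range (\<lambda>n::nat. {- real n<..real n}) \<subseteq> range (\<lambda>(a, b). {a<..b})"
    by (auto intro: range_eqI[where x="(- real _, real _)"])
  show "X \<in> range (\<lambda>(a, b). {a<..b}) \<Longrightarrow> emeasure M X = emeasure N X" for X
    using eq by auto
  show "X \<in> range (\<lambda>n::nat. {- real n<..real n}) \<Longrightarrow> emeasure M X \<noteq> \<infinity>" for X
    using fin by auto
qed auto

lemma emeasure_distr_cmod_square_Ioc:
  "emeasure (distr (lborel::complex measure) borel (\<lambda>z. (cmod z)^2)) {a<..b}
     = ennreal (pi * (max b 0 - max a 0))"
proof (cases "a \<le> b")
  case False
  then have "pi * (max b 0 - max a 0) \<le> 0"
    by (intro mult_nonneg_nonpos) auto
  with False show ?thesis
    by (simp add: ennreal_neg)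
next
  case True
  have "emeasure (distr (lborel::complex measure) borel (\<lambda>z. (cmod z)^2)) {a<..b}
      = emeasure lborel ({z::complex. (cmod z)^2 \<le> b} - {z. (cmod z)^2 \<le> a})"
    by (subst emeasure_distr) (auto intro!: arg_cong[where f="emeasure lborel"])
  also have "\<dots> = ennreal (pi * max b 0) - ennreal (pi * max a 0)"
    using True by (subst emeasure_Diff) (auto simp: emeasure_lborel_cmod_square_le)
  also have "\<dots> = ennreal (pi * (max b 0 - max a 0))"
    using True by (subst ennreal_minus) (auto simp: algebra_simps max_def)
  finally show ?thesis .
qed

lemma emeasure_density_Ioi_Ioc:
  "emeasure (density lborel (\<lambda>u. ennreal pi * indicator {0<..} u)) {a<..b}
     = ennreal (pi * (max b 0 - max a 0))"
proof -
  have "emeasure (density lborel (\<lambda>u. ennreal pi * indicator {0<..} u)) {a<..b}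
      = ennreal pi * emeasure lborel ({a<..b} \<inter> {0<..})"
    by (subst emeasure_density, simp, simp, subst nn_integral_cmult_indicator[symmetric])
      (auto intro!: nn_integral_cong split: split_indicator)
  also have "{a<..b} \<inter> {0<..} = {max a 0<..max b 0}"
    by auto
  finally show ?thesis
    by (cases "a \<le> b") (auto simp: ennreal_mult' max_def ennreal_neg)
qed

lemma distr_lborel_cmod_square:
  "distr (lborel::complex measure) borel (\<lambda>z. (cmod z)^2)
     = density lborel (\<lambda>u. ennreal pi * indicator {0<..} u)"
  by (rule measure_eqI_Ioc) (simp_all add: emeasure_distr_cmod_square_Ioc emeasure_density_Ioi_Ioc)

lemma nn_integral_lborel_cmod_square:
  assumes [measurable]: "f \<in> borel_measurable borel"
  shows "(\<integral>\<^sup>+ z. f ((cmod z)^2) \<partial>(lborel::complex measure))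
     = ennreal pi * (\<integral>\<^sup>+ u. indicator {0<..} u * f u \<partial>lborel)"
proof -
  have "(\<integral>\<^sup>+ z. f ((cmod z)^2) \<partial>(lborel::complex measure))
      = (\<integral>\<^sup>+ u. f u \<partial>distr (lborel::complex measure) borel (\<lambda>z. (cmod z)^2))"
    by (subst nn_integral_distr) auto
  also have "\<dots> = (\<integral>\<^sup>+ u. ennreal pi * (indicator {0<..} u * f u) \<partial>lborel)"
    unfolding distr_lborel_cmod_square by (subst nn_integral_density) (auto simp: mult.assoc)
  finally show ?thesis
    by (simp add: nn_integral_cmult)
qed

lemma nn_integral_lborel_complex2_cmod_square:
  fixes G :: "real \<Rightarrow> real \<Rightarrow> ennreal"
  assumes G[measurable]: "case_prod G \<in> borel_measurable (borel \<Otimes>\<^sub>M borel)"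
  shows "(\<integral>\<^sup>+ z. G ((cmod (fst z))^2) ((cmod (snd z))^2) \<partial>(lborel::(complex \<times> complex) measure))
     = ennreal (pi^2) * (\<integral>\<^sup>+ v. indicator {0<..} v
                             * (\<integral>\<^sup>+ u. indicator {0<..} u * G u v \<partial>lborel) \<partial>lborel)"
proof -
  define H where "H v = (\<integral>\<^sup>+ u. indicator {0<..} u * G u v \<partial>lborel)" for v
  have [measurable]: "H \<in> borel_measurable borel"
    unfolding H_def by (rule lborel.borel_measurable_nn_integral) measurable
  have "(\<lambda>z. G ((cmod (fst z))^2) ((cmod (snd z))^2)) \<in> borel_measurable (lborel \<Otimes>\<^sub>M lborel)"
    by measurable
  then have "(\<integral>\<^sup>+ z. G ((cmod (fst z))^2) ((cmod (snd z))^2) \<partial>(lborel::(complex \<times> complex) measure))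
      = (\<integral>\<^sup>+ z2. (\<integral>\<^sup>+ z1. G ((cmod z1)^2) ((cmod z2)^2) \<partial>lborel) \<partial>lborel)"
    by (simp add: lborel_prod[symmetric] lborel_pair.nn_integral_snd[symmetric])
  also have "\<dots> = (\<integral>\<^sup>+ z2. ennreal pi * H ((cmod z2)^2) \<partial>(lborel::complex measure))"
    unfolding H_def by (subst nn_integral_lborel_cmod_square) auto
  also have "\<dots> = ennreal pi * (\<integral>\<^sup>+ v. indicator {0<..} v * (ennreal pi * H v) \<partial>lborel)"
    by (subst nn_integral_lborel_cmod_square) auto
  also have "\<dots> = ennreal pi * (ennreal pi * (\<integral>\<^sup>+ v. indicator {0<..} v * H v \<partial>lborel))"
    by (subst nn_integral_cmult[symmetric]) (auto simp: mult.left_commute)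
  also have "\<dots> = ennreal (pi^2) * (\<integral>\<^sup>+ v. indicator {0<..} v * H v \<partial>lborel)"
    by (simp add: power2_eq_square ennreal_mult' mult.assoc)
  finally show ?thesis
    unfolding H_def .
qed

lemma nn_integral_powr_Ioo:
  assumes "0 \<le> c" "-1 < p"
  shows "(\<integral>\<^sup>+ u. indicator {0<..<c} u * ennreal (u powr p) \<partial>lborel) = ennreal (c powr (p + 1) / (p + 1))"
proof -
  have "(\<integral>\<^sup>+ u. indicator {0<..<c} u * ennreal (u powr p) \<partial>lborel)
      = (\<integral>\<^sup>+ u. ennreal (u powr p) * indicator {0..c} u \<partial>lborel)"
  proof (intro nn_integral_cong_AE)
    show "AE u in lborel. indicator {0<..<c} u * ennreal (u powr p) = ennreal (u powr p) * indicator {0..c} u"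
      using AE_lborel_singleton[of 0] AE_lborel_singleton[of c]
      by eventually_elim (auto split: split_indicator)
  qed
  also have "\<dots> = ennreal (c powr (p + 1) / (p + 1))"
    by (rule nn_integral_has_integral_lebesgue') (use assms has_integral_powr_from_0 in auto)
  finally show ?thesis .
qed

lemma powr_less_iff_less_powr_inverse:
  fixes u v r :: real
  assumes "0 < u" "0 < v" "0 < r"
  shows "u powr r < v \<longleftrightarrow> u < v powr (1 / r)"
proof -
  have "u = (u powr r) powr (1 / r)" and "v = (v powr (1 / r)) powr r"
    using assms by (simp_all add: powr_powr)
  then show ?thesis
    using assms by (metis powr_less_mono2 powr_ge_zero divide_pos_pos zero_less_one)
qed

lemma nn_integral_hartogs_fibre:
  fixes r p v :: real and k :: nat
  assumes r: "0 < r" and v: "0 < v" "v < 1"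
  shows "(\<integral>\<^sup>+ u. indicator {0<..} u * (if u powr r < v then ennreal (u ^ k * v powr p) else 0) \<partial>lborel)
     = ennreal (v powr ((real k + 1) / r + p) / (real k + 1))"
proof -
  have "(\<integral>\<^sup>+ u. indicator {0<..} u * (if u powr r < v then ennreal (u ^ k * v powr p) else 0) \<partial>lborel)
      = (\<integral>\<^sup>+ u. indicator {0<..<v powr (1 / r)} u * ennreal (u powr real k) * ennreal (v powr p) \<partial>lborel)"
  proof (intro nn_integral_cong)
    fix u :: real
    show "indicator {0<..} u * (if u powr r < v then ennreal (u ^ k * v powr p) else 0)
        = indicator {0<..<v powr (1 / r)} u * ennreal (u powr real k) * ennreal (v powr p)"
      using r v by (cases "0 < u")
        (auto simp: powr_less_iff_less_powr_inverse powr_realpow ennreal_mult' split: split_indicator)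
  qed
  also have "\<dots> = ennreal ((v powr (1 / r)) powr (real k + 1) / (real k + 1)) * ennreal (v powr p)"
    by (subst nn_integral_multc) (auto simp: nn_integral_powr_Ioo)
  also have "\<dots> = ennreal (v powr ((real k + 1) / r + p) / (real k + 1))"
    using v by (simp add: ennreal_mult'[symmetric] powr_powr powr_add[symmetric] add_divide_distrib)
  finally show ?thesis .
qed

lemma nn_integral_hartogs:
  fixes r p :: real and k :: nat
  assumes r: "0 < r" and exponent: "-1 < (real k + 1) / r + p"
  shows "(\<integral>\<^sup>+ v. indicator {0<..} v * (\<integral>\<^sup>+ u. indicator {0<..} u *
            (if u powr r < v \<and> v < 1 then ennreal (u ^ k * v powr p) else 0) \<partial>lborel) \<partial>lborel)
     = ennreal (1 / ((real k + 1) * ((real k + 1) / r + p + 1)))"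
proof -
  define q where "q = (real k + 1) / r + p"
  have "(\<integral>\<^sup>+ v. indicator {0<..} v * (\<integral>\<^sup>+ u. indicator {0<..} u *
            (if u powr r < v \<and> v < 1 then ennreal (u ^ k * v powr p) else 0) \<partial>lborel) \<partial>lborel)
      = (\<integral>\<^sup>+ v. indicator {0<..<1} v * ennreal (v powr q) * ennreal (1 / (real k + 1)) \<partial>lborel)"
  proof (intro nn_integral_cong)
    fix v :: real
    show "indicator {0<..} v * (\<integral>\<^sup>+ u. indicator {0<..} u *
            (if u powr r < v \<and> v < 1 then ennreal (u ^ k * v powr p) else 0) \<partial>lborel)
        = indicator {0<..<1} v * ennreal (v powr q) * ennreal (1 / (real k + 1))"
      using r by (cases "0 < v \<and> v < 1")
        (auto simp: nn_integral_hartogs_fibre q_def ennreal_mult'[symmetric] split: split_indicator)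
  qed
  also have "\<dots> = ennreal (1 / ((real k + 1) * (q + 1)))"
    using exponent by (subst nn_integral_multc) (auto simp: nn_integral_powr_Ioo q_def ennreal_mult'[symmetric])
  finally show ?thesis
    unfolding q_def .
qed

section \<open>Norms of the monomials\<close>

lemma borel_measurable_power_int [measurable]:
  "(\<lambda>x::'a::real_normed_field. x powi k) \<in> borel_measurable borel"
  unfolding power_int_def by measurable

lemma power2_powr:
  fixes x r :: real
  assumes "0 \<le> x"
  shows "(x^2) powr r = (x powr r)^2"
  using assms by (metis powr_ge_zero powr_numeral powr_powr_swap)

lemma mem_hartogs_H_iff_cmod_square:
  "z \<in> hartogs_H m n \<longleftrightarrow>
     ((cmod (fst z))^2) powr (real m / real n) < (cmod (snd z))^2 \<and> (cmod (snd z))^2 < 1"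
proof -
  have square_less_iff: "a^2 < b^2 \<longleftrightarrow> a < b" if "0 \<le> a" "0 \<le> b" for a b :: real
    using that by (metis power_less_imp_less_base power_strict_mono pos2)
  show ?thesis
    unfolding hartogs_H_def
    by (simp add: power2_powr square_less_iff powr_ge_zero abs_square_less_1)
qed

lemma cmod_monom2_square:
  assumes "snd z \<noteq> 0" and "0 \<le> fst a"
  shows "(cmod (monom2 a z))^2 = ((cmod (fst z))^2) ^ nat (fst a) * ((cmod (snd z))^2) powr of_int (snd a)"
proof -
  have "cmod (monom2 a z) = cmod (fst z) ^ nat (fst a) * cmod (snd z) powr of_int (snd a)"
    using assms by (simp add: monom2_def norm_mult norm_power norm_power_int powr_real_of_int')
  then show ?thesis
    by (simp add: power_mult_distrib power2_powr flip: power_mult) (simp add: mult.commute)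
qed

lemma indicator_hartogs_H_cmod_monom2_square:
  assumes "0 \<le> fst a"
  shows "ennreal (indicator (hartogs_H m n) z * (cmod (monom2 a z))^2)
    = (if ((cmod (fst z))^2) powr (real m / real n) < (cmod (snd z))^2 \<and> (cmod (snd z))^2 < 1
       then ennreal (((cmod (fst z))^2) ^ nat (fst a) * ((cmod (snd z))^2) powr of_int (snd a)) else 0)"
proof (cases "z \<in> hartogs_H m n")
  case True
  then have "snd z \<noteq> 0"
    by (auto simp: mem_hartogs_H_iff_cmod_square dest: le_less_trans[OF powr_ge_zero])
  with True assms show ?thesis
    by (simp add: cmod_monom2_square mem_hartogs_H_iff_cmod_square)
next
  case False
  then show ?thesis
    unfolding mem_hartogs_H_iff_cmod_square[symmetric] by simp
qed

lemma monom_norm_sq_eq: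
  assumes m: "0 < m" and n: "0 < n" and a: "a \<in> adm_exps m n"
  shows "monom_norm_sq m n a = pi^2 * real m /
    ((of_int (fst a) + 1) * (real m * (of_int (snd a) + 1) + real n * (of_int (fst a) + 1)))"
proof -
  define r where "r = real m / real n"
  define k where "k = nat (fst a)"
  define p :: real where "p = of_int (snd a)"
  define G where "G u v = (if u powr r < v \<and> v < 1 then ennreal (u ^ k * v powr p) else 0)" for u v
  define F where "F z = indicator (hartogs_H m n) z * (cmod (monom2 a z))^2" for z
  have r_pos: "0 < r"
    using m n by (simp add: r_def)
  have k: "real k = of_int (fst a)"
    using a by (simp add: k_def adm_exps_def)
  have "real_of_int (- int m - int n + 1) \<le> real_of_int (int n * fst a + int m * snd a)"
    using a unfolding adm_exps_def of_int_le_iff by simp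
  then have exponent: "-1 < (real k + 1) / r + p"
    using m n by (simp add: k r_def p_def field_simps)
  have [measurable]: "case_prod G \<in> borel_measurable (borel \<Otimes>\<^sub>M borel)"
    unfolding G_def by measurable
  have [measurable]: "F \<in> borel_measurable borel"
    unfolding F_def hartogs_H_def monom2_def borel_prod[symmetric] by measurable
  have F_eq_G: "ennreal (F z) = G ((cmod (fst z))^2) ((cmod (snd z))^2)" for z
    using a unfolding F_def G_def r_def k_def p_def adm_exps_def
    by (simp add: indicator_hartogs_H_cmod_monom2_square)
  have "monom_norm_sq m n a = enn2real (\<integral>\<^sup>+ z. ennreal (F z) \<partial>lborel)"
    unfolding monom_norm_sq_def F_def[symmetric] by (rule integral_eq_nn_integral) (measurable, simp add: F_def)
  also have "\<dots> = enn2real (ennreal (pi^2) * ennreal (1 / ((real k + 1) * ((real k + 1) / r + p + 1))))"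
    unfolding F_eq_G nn_integral_lborel_complex2_cmod_square[of G, simplified]
    unfolding G_def nn_integral_hartogs[OF r_pos exponent] ..
  also have "\<dots> = pi^2 / ((real k + 1) * ((real k + 1) / r + p + 1))"
    using exponent by (simp add: ennreal_mult'[symmetric])
  also have "\<dots> = pi^2 * real m /
      ((of_int (fst a) + 1) * (real m * (of_int (snd a) + 1) + real n * (of_int (fst a) + 1)))"
    using m n by (simp add: k p_def r_def field_simps)
  finally show ?thesis .
qed

section \<open>Arithmetico-geometric double series\<close>

lemma has_sum_prod_of_norm_summable:
  fixes A B :: "nat \<Rightarrow> 'a::{real_normed_div_algebra, banach, second_countable_topology}"
  assumes A: "summable (\<lambda>k. norm (A k))" "A sums SA"
      and B: "summable (\<lambda>l. norm (B l))" "B sums SB"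
  shows "((\<lambda>(k, l). A k * B l) has_sum SA * SB) UNIV"
proof -
  have norm_A: "((\<lambda>k. norm (A k)) has_sum (\<Sum>k. norm (A k))) UNIV"
    by (rule sums_nonneg_imp_has_sum[OF summable_sums[OF A(1)]]) simp
  have norm_B: "((\<lambda>l. norm (B l)) has_sum (\<Sum>l. norm (B l))) UNIV"
    by (rule sums_nonneg_imp_has_sum[OF summable_sums[OF B(1)]]) simp
  have "(\<lambda>(k, l). norm (A k * B l)) summable_on UNIV \<times> UNIV"
  proof (rule summable_on_SigmaI[where g="\<lambda>k. norm (A k) * (\<Sum>l. norm (B l))"])
    show "((\<lambda>l. case (k, l) of (k, l) \<Rightarrow> norm (A k * B l)) has_sum norm (A k) * (\<Sum>l. norm (B l))) UNIV"
      for k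
      using has_sum_cmult_right[OF norm_B, of "norm (A k)"] by (simp add: norm_mult)
    show "(\<lambda>k. norm (A k) * (\<Sum>l. norm (B l))) summable_on UNIV"
      using has_sum_cmult_left[OF norm_A] by (auto simp: summable_on_def)
  qed simp
  then have "(\<lambda>p. norm ((\<lambda>(k, l). A k * B l) p)) summable_on UNIV \<times> UNIV"
    by (simp add: case_prod_unfold)
  then have "(\<lambda>(k, l). A k * B l) summable_on UNIV \<times> UNIV"
    by (rule abs_summable_summable)
  then have "((\<lambda>(k, l). A k * B l) has_sum SA * SB) (UNIV \<times> UNIV)"
  proof (rule has_sum_SigmaI[where g="\<lambda>k. A k * SB", rotated 2])
    show "((\<lambda>l. case (k, l) of (k, l) \<Rightarrow> A k * B l) has_sum A k * SB) UNIV" for k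
      using has_sum_cmult_right[OF norm_summable_imp_has_sum[OF B]] by simp
    show "((\<lambda>k. A k * SB) has_sum SA * SB) UNIV"
      using has_sum_cmult_left[OF norm_summable_imp_has_sum[OF A]] .
  qed
  then show ?thesis
    by simp
qed

lemma arith_geometric_sums:
  fixes x c d :: "'a::{real_normed_field, banach}"
  assumes "norm x < 1"
  shows "(\<lambda>k. (c + d * of_nat k) * x ^ k) sums ((c + (d - c) * x) / (1 - x)^2)"
proof -
  have "1 - x \<noteq> 0"
    using assms by auto
  then have "(c - d) / (1 - x) + d / (1 - x)^2 = (c + (d - c) * x) / (1 - x)^2"
    by (simp add: divide_simps power2_eq_square) (simp add: algebra_simps)
  moreover have "(c - d) * x ^ k + d * (of_nat (Suc k) * x ^ k) = (c + d * of_nat k) * x ^ k" for k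
    by (simp add: algebra_simps)
  moreover have "(\<lambda>k. (c - d) * x ^ k + d * (of_nat (Suc k) * x ^ k))
      sums ((c - d) * (1 / (1 - x)) + d * (1 / (1 - x)^2))"
    by (intro sums_add sums_mult geometric_sums geometric_deriv_sums assms)
  ultimately show ?thesis
    by simp
qed

lemma summable_norm_arith_geometric:
  fixes x c d :: "'a::{real_normed_field, banach}"
  assumes "norm x < 1"
  shows "summable (\<lambda>k. norm ((c + d * of_nat k) * x ^ k))"
proof (rule summable_comparison_test')
  show "summable (\<lambda>k. (norm c + norm d * of_nat k) * norm x ^ k)"
    using assms by (intro sums_summable[OF arith_geometric_sums]) simp
  show "norm (norm ((c + d * of_nat k) * x ^ k)) \<le> (norm c + norm d * of_nat k) * norm x ^ k" for k
    by (simp add: norm_mult norm_power mult_right_mono norm_triangle_le)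
qed

section \<open>Parametrising the exponents\<close>

(* \<open>E\<^sub>j\<close> of the paper; integer division replaces the floor. *)
definition exps_E :: "nat \<Rightarrow> nat \<Rightarrow> nat \<Rightarrow> int" where
  "exps_E m n j = (int ((j + 1) * n) - 1) div int m"

definition exps_G_param :: "nat \<Rightarrow> nat \<Rightarrow> nat \<Rightarrow> nat \<times> nat \<Rightarrow> int \<times> int" where
  "exps_G_param m n j p = (int j + int m * int (fst p), int (snd p) - int n * int (fst p) - 1 - exps_E m n j)"

lemma exps_E_bounds:
  assumes "0 < m"
  shows "int m * exps_E m n j \<le> int ((j + 1) * n) - 1"
    and "int ((j + 1) * n) - 1 < int m * (exps_E m n j + 1)"
proof -
  let ?N = "int ((j + 1) * n) - 1"
  have "?N = int m * exps_E m n j + ?N mod int m"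
    unfolding exps_E_def by simp
  moreover have "0 \<le> ?N mod int m" "?N mod int m < int m"
    using assms by simp_all
  ultimately show "int m * exps_E m n j \<le> ?N" "?N < int m * (exps_E m n j + 1)"
    by (simp_all add: algebra_simps)
qed

lemma bij_betw_exps_G_param:
  assumes m: "0 < m" and j: "j < m"
  shows "bij_betw (exps_G_param m n j) UNIV (exps_G m n j)"
proof (rule bij_betwI')
  show "exps_G_param m n j p = exps_G_param m n j p' \<longleftrightarrow> p = p'" for p p'
    using m by (auto simp: exps_G_param_def prod_eq_iff)
  show "exps_G_param m n j p \<in> exps_G m n j" for p
  proof -
    have "int n * (int j + int m * int (fst p)) + int m * (int (snd p) - int n * int (fst p) - 1 - exps_E m n j)
        = (int ((j + 1) * n) - 1 - int m * exps_E m n j) + int m * int (snd p) - int m - int n + 1"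
      by (simp add: algebra_simps)
    also have "\<dots> \<ge> - int m - int n + 1"
      using exps_E_bounds(1)[OF m, where n=n and j=j] zero_le_mult_iff[of "int m" "int (snd p)"] by linarith
    finally show ?thesis
      using j by (simp add: exps_G_param_def exps_G_def adm_exps_def)
  qed
  show "\<exists>p\<in>UNIV. a = exps_G_param m n j p" if a: "a \<in> exps_G m n j" for a
  proof -
    define k where "k = fst a div int m"
    define l where "l = snd a + int n * k + 1 + exps_E m n j"
    have fst_a: "fst a = int j + int m * k"
      using a by (simp add: exps_G_def k_def) (metis add.commute div_mult_mod_eq mult.commute)
    have "0 \<le> k"
      using a m by (simp add: exps_G_def adm_exps_def k_def pos_imp_zdiv_nonneg_iff)
    moreover have "0 \<le> l"
    proof -
      have "int n * fst a + int m * snd a \<ge> - int m - int n + 1"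
        using a by (simp add: exps_G_def adm_exps_def)
      then have "int m * (l - exps_E m n j) \<ge> 1 - int ((j + 1) * n)"
        unfolding fst_a l_def by (simp add: algebra_simps)
      then have "int m * (- 1) < int m * l"
        using exps_E_bounds(2)[OF m, where n=n and j=j] by (simp add: algebra_simps)
      then have "- 1 < l"
        using m by (simp only: mult_less_cancel_left_pos of_nat_0_less_iff)
      then show ?thesis
        by simp
    qed
    ultimately have "a = exps_G_param m n j (nat k, nat l)"
      by (simp add: exps_G_param_def prod_eq_iff fst_a l_def)
    then show ?thesis
      by blast
  qed
qed

section \<open>The sub-Bergman kernel\<close>

lemma hartogs_H_cmod_bounds:
  assumes "z \<in> hartogs_H m n" and "0 < m" and "0 < n"
  shows "0 < cmod (snd z)" "cmod (snd z) < 1" "cmod (fst z) ^ m < cmod (snd z) ^ n"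
proof -
  have z: "cmod (fst z) powr (real m / real n) < cmod (snd z)" "cmod (snd z) < 1"
    using assms(1) by (auto simp: hartogs_H_def)
  show "0 < cmod (snd z)"
    using z(1) by (meson le_less_trans powr_ge_zero)
  show "cmod (snd z) < 1"
    by (rule z(2))
  show "cmod (fst z) ^ m < cmod (snd z) ^ n"
  proof (cases "fst z = 0")
    case True
    then show ?thesis
      using \<open>0 < cmod (snd z)\<close> assms(2) by (simp add: zero_power)
  next
    case False
    have "(cmod (fst z) powr (real m / real n)) ^ n = cmod (fst z) ^ m"
      using False assms(3) by (simp add: powr_realpow[symmetric] powr_powr)
    then show ?thesis
      using power_strict_mono[OF z(1) powr_ge_zero assms(3)] by simp
  qed
qed

lemma hartogs_H_cnj_mult_bounds:
  assumes z: "z \<in> hartogs_H m n" and w: "w \<in> hartogs_H m n" and m: "0 < m" and n: "0 < n"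
  shows "snd z * cnj (snd w) \<noteq> 0" and "norm (snd z * cnj (snd w)) < 1"
    and "norm (fst z * cnj (fst w)) ^ m < norm (snd z * cnj (snd w)) ^ n"
proof -
  note z_bounds = hartogs_H_cmod_bounds[OF z m n] and w_bounds = hartogs_H_cmod_bounds[OF w m n]
  show "snd z * cnj (snd w) \<noteq> 0"
    using z_bounds w_bounds by auto
  show "norm (snd z * cnj (snd w)) < 1"
    using z_bounds w_bounds unfolding norm_mult complex_mod_cnj
    by (metis mult_strict_mono' mult_1_left norm_ge_zero)
  show "norm (fst z * cnj (fst w)) ^ m < norm (snd z * cnj (snd w)) ^ n"
    using z_bounds w_bounds unfolding norm_mult complex_mod_cnj power_mult_distrib
    by (intro mult_strict_mono) simp_all
qed

lemma monom2_mult_cnj: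
  "monom2 a z * cnj (monom2 a w) = (fst z * cnj (fst w)) ^ nat (fst a) * (snd z * cnj (snd w)) powi snd a"
  by (simp add: monom2_def power_mult_distrib power_int_mult_distrib)

lemma monom2_exps_G_param_mult_cnj:
  fixes m n j k l :: nat and z w :: "complex \<times> complex"
  defines "s \<equiv> fst z * cnj (fst w)" and "t \<equiv> snd z * cnj (snd w)"
    and "a \<equiv> exps_G_param m n j (k, l)"
  assumes t: "t \<noteq> 0"
  shows "monom2 a z * cnj (monom2 a w) = s ^ j * (s ^ m / t ^ n) ^ k * (t powi (- 1 - exps_E m n j) * t ^ l)"
proof -
  have powi_add: "t powi (x + y) = t powi x * t powi y" for x y
    using t by (simp add: power_int_add)
  have "snd a = (- 1 - exps_E m n j) + - int (n * k) + int l"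
    by (simp add: a_def exps_G_param_def)
  then have "t powi snd a = t powi (- 1 - exps_E m n j) * t powi (- int (n * k)) * t powi int l"
    by (simp only: powi_add)
  also have "\<dots> = t powi (- 1 - exps_E m n j) * (inverse (t ^ n)) ^ k * t ^ l"
    by (simp only: power_int_minus power_int_of_nat power_mult power_inverse)
  finally show ?thesis
    by (simp add: monom2_mult_cnj a_def exps_G_param_def nat_add_distrib nat_mult_distrib power_add
        power_mult power_divide divide_inverse power_mult_distrib flip: s_def t_def)
qed

lemma sub_bergman_term_exps_G_param:
  fixes m n j k l :: nat and z w :: "complex \<times> complex"
  defines "s \<equiv> fst z * cnj (fst w)" and "t \<equiv> snd z * cnj (snd w)"
    and "E \<equiv> exps_E m n j" and "a \<equiv> exps_G_param m n j (k, l)"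
  assumes m: "0 < m" and n: "0 < n" and j: "j < m" and t: "t \<noteq> 0"
  shows "monom2 a z * cnj (monom2 a w) / complex_of_real (monom_norm_sq m n a)
       = s ^ j * t powi (- 1 - E) / complex_of_real (pi^2 * real m)
         * ((of_nat (j + 1) + of_nat m * of_nat k) * (s ^ m / t ^ n) ^ k)
         * ((of_int (int ((j + 1) * n) - int m * E) + of_nat m * of_nat l) * t ^ l)"
proof -
  define X where "X = real (j + 1) + real m * real k"
  define Y where "Y = of_int (int ((j + 1) * n) - int m * E) + real m * real l"
  have "a \<in> adm_exps m n"
    using bij_betw_apply[OF bij_betw_exps_G_param[OF m j], of "(k, l)"]
    by (simp add: a_def exps_G_def)
  then have norm_a: "monom_norm_sq m n a = pi^2 * real m / (X * Y)"
    using m n by (simp add: monom_norm_sq_eq a_def E_def exps_G_param_def X_def Y_def algebra_simps)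
  have monom_a: "monom2 a z * cnj (monom2 a w) = s ^ j * (s ^ m / t ^ n) ^ k * (t powi (- 1 - E) * t ^ l)"
    using monom2_exps_G_param_mult_cnj[OF t[unfolded t_def]] by (simp only: a_def s_def t_def E_def)
  have "0 < X"
    by (simp add: X_def add_pos_nonneg)
  moreover have "0 < Y"
    unfolding Y_def
  proof (rule add_pos_nonneg)
    show "0 < real_of_int (int ((j + 1) * n) - int m * E)"
      using exps_E_bounds(1)[OF m, where n=n and j=j] unfolding E_def of_int_0_less_iff by linarith
  qed simp
  moreover have "of_nat (j + 1) + of_nat m * of_nat k = complex_of_real X"
    and "of_int (int ((j + 1) * n) - int m * E) + of_nat m * of_nat l = complex_of_real Y"
    by (simp_all add: X_def Y_def)
  ultimately show ?thesis
    unfolding norm_a monom_a by (simp add: divide_divide_eq_right mult_ac)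
qed

lemma sub_bergman_eq_product:
  fixes m n j :: nat and z w :: "complex \<times> complex"
  defines "s \<equiv> fst z * cnj (fst w)" and "t \<equiv> snd z * cnj (snd w)"
    and "E \<equiv> exps_E m n j" and "D \<equiv> int ((j + 1) * n) - int m * exps_E m n j"
  assumes m: "0 < m" and n: "0 < n" and j: "j < m"
    and z: "z \<in> hartogs_H m n" and w: "w \<in> hartogs_H m n"
  shows "sub_bergman m n j z w
     = s ^ j * t powi (- 1 - E) / complex_of_real (pi^2 * real m)
       * ((of_nat (j + 1) + (of_nat m - of_nat (j + 1)) * (s ^ m / t ^ n)) / (1 - s ^ m / t ^ n)^2)
       * ((of_int D + (of_nat m - of_int D) * t) / (1 - t)^2)"
proof -
  define C where "C = s ^ j * t powi (- 1 - E) / complex_of_real (pi^2 * real m)"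
  define A where "A k = (of_nat (j + 1) + of_nat m * of_nat k) * (s ^ m / t ^ n) ^ k" for k :: nat
  define B where "B l = (of_int D + of_nat m * of_nat l) * t ^ l" for l :: nat
  obtain t0: "t \<noteq> 0" and t1: "norm t < 1" and st: "norm s ^ m < norm t ^ n"
    using hartogs_H_cnj_mult_bounds[OF z w m n] by (simp add: s_def t_def)
  have q1: "norm (s ^ m / t ^ n) < 1"
    using st t0 by (simp add: norm_divide norm_power)
  have "((\<lambda>(k, l). A k * B l) has_sum
      (of_nat (j + 1) + (of_nat m - of_nat (j + 1)) * (s ^ m / t ^ n)) / (1 - s ^ m / t ^ n)^2
      * ((of_int D + (of_nat m - of_int D) * t) / (1 - t)^2)) UNIV"
    unfolding A_def B_def using q1 t1
    by (intro has_sum_prod_of_norm_summable arith_geometric_sums summable_norm_arith_geometric)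
  then have "((\<lambda>p. C * (\<lambda>(k, l). A k * B l) p) has_sum C *
      ((of_nat (j + 1) + (of_nat m - of_nat (j + 1)) * (s ^ m / t ^ n)) / (1 - s ^ m / t ^ n)^2
       * ((of_int D + (of_nat m - of_int D) * t) / (1 - t)^2))) UNIV"
    by (rule has_sum_cmult_right)
  moreover have "monom2 (exps_G_param m n j p) z * cnj (monom2 (exps_G_param m n j p) w)
      / complex_of_real (monom_norm_sq m n (exps_G_param m n j p)) = C * (\<lambda>(k, l). A k * B l) p" for p
    using sub_bergman_term_exps_G_param[OF m n j, of z w "fst p" "snd p"] t0
    by (simp add: case_prod_unfold A_def B_def C_def D_def s_def t_def E_def mult.assoc)
  ultimately have "sub_bergman m n j z w = C *
      ((of_nat (j + 1) + (of_nat m - of_nat (j + 1)) * (s ^ m / t ^ n)) / (1 - s ^ m / t ^ n)^2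
       * ((of_int D + (of_nat m - of_int D) * t) / (1 - t)^2))"
    unfolding sub_bergman_def infsum_reindex_bij_betw[OF bij_betw_exps_G_param[OF m j], symmetric]
    by (simp add: infsumI)
  then show ?thesis
    by (simp add: C_def mult.assoc)
qed

lemma arith_geometric_closed_forms_mult:
  fixes S T t c M N D g P Q K :: "'a::field"
  assumes T: "T \<noteq> 0" and TS: "T \<noteq> S" and t: "t \<noteq> 1" and g: "N * g = D + (M - D) * t"
  shows "P * Q / K * ((c + (M - c) * (S / T)) / (1 - S / T)^2) * ((D + (M - D) * t) / (1 - t)^2)
     = N / K * ((c * T + (M - c) * S) * g * P * (Q * T)) / ((1 - t)^2 * (T - S)^2)"
proof -
  have "T - S \<noteq> 0" "1 - t \<noteq> 0"
    using TS t by simp_all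
  have "1 - S / T = (T - S) / T"
    using T by (simp add: field_simps)
  then have first: "(c + (M - c) * (S / T)) / (1 - S / T)^2 = T * (c * T + (M - c) * S) / (T - S)^2"
    using T \<open>T - S \<noteq> 0\<close> by (simp add: divide_simps) (simp add: algebra_simps power2_eq_square)
  show ?thesis
    unfolding first g[symmetric] using \<open>T - S \<noteq> 0\<close> \<open>1 - t \<noteq> 0\<close> by (simp add: field_simps)
qed

lemma kernel_product_closed_form:
  fixes s t :: complex and m n j :: nat and E :: int
  defines "D \<equiv> int ((j + 1) * n) - int m * E"
  assumes n: "0 < n" and j: "j < m"
    and t0: "t \<noteq> 0" and t1: "norm t < 1" and st: "norm s ^ m < norm t ^ n"
  shows "s ^ j * t powi (- 1 - E) / complex_of_real (pi^2 * real m)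
       * ((of_nat (j + 1) + (of_nat m - of_nat (j + 1)) * (s ^ m / t ^ n)) / (1 - s ^ m / t ^ n)^2)
       * ((of_int D + (of_nat m - of_int D) * t) / (1 - t)^2)
     = complex_of_real (real n / (real m * pi^2))
       * ((of_nat (j + 1) * t ^ n + of_nat (m - j - 1) * s ^ m)
          * (complex_of_real (real (j + 1) - real m / real n * of_int E)
             + complex_of_real (real m / real n + real m / real n * of_int E - real (j + 1)) * t)
          * s ^ j * t powi (int n - 1 - E))
       / ((1 - t)^2 * (t ^ n - s ^ m)^2)"
proof -
  have tn: "t ^ n \<noteq> 0"
    using t0 by simp
  have ts: "t ^ n \<noteq> s ^ m"
    using st by (metis norm_power less_irrefl)
  have t_ne_1: "t \<noteq> 1"
    using t1 by auto
  have g: "of_nat n * (complex_of_real (real (j + 1) - real m / real n * of_int E)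
      + complex_of_real (real m / real n + real m / real n * of_int E - real (j + 1)) * t)
      = of_int D + (of_nat m - of_int D) * t"
    using n by (simp add: D_def field_simps)
  have "t powi (int n - 1 - E) = t powi ((- 1 - E) + int n)"
    by (rule arg_cong[where f="power_int t"]) simp
  also have "\<dots> = t powi (- 1 - E) * t ^ n"
    using t0 by (simp add: power_int_add)
  finally have powi: "t powi (int n - 1 - E) = t powi (- 1 - E) * t ^ n" .
  have prefactor: "complex_of_real (real n / (real m * pi^2)) = of_nat n / complex_of_real (pi^2 * real m)"
    by (simp add: mult.commute)
  have diff: "of_nat (m - j - 1) = (of_nat m - of_nat (j + 1) :: complex)"
    using j by (simp add: of_nat_diff)
  show ?thesis
    unfolding powi prefactor diff by (rule arith_geometric_closed_forms_mult[OF tn ts t_ne_1 g])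
qed

theorem theorem2p4:
  fixes m n j :: nat and z w :: "complex \<times> complex"
  assumes "m > 0" and "n > 0" and "coprime m n" and "j < m"
    and "z \<in> hartogs_H m n" and "w \<in> hartogs_H m n"
  shows "let s = fst z * cnj (fst w); t = snd z * cnj (snd w);
             E = \<lfloor>(real ((j + 1) * n) - 1) / real m\<rfloor>;
             f = of_nat (j + 1) * t ^ n + of_nat (m - j - 1) * s ^ m;
             g = complex_of_real (real (j + 1) - real m / real n * of_int E)
                 + complex_of_real (real m / real n + real m / real n * of_int E - real (j + 1)) * t
         in sub_bergman m n j z w
            = complex_of_real (real n / (real m * pi\<^sup>2))
              * (f * g * s ^ j * t powi (int n - 1 - E))
              / ((1 - t)\<^sup>2 * (t ^ n - s ^ m)\<^sup>2)"
proof -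
  have E_floor: "\<lfloor>(real ((j + 1) * n) - 1) / real m\<rfloor> = exps_E m n j"
    using floor_divide_of_int_eq[of "int ((j + 1) * n) - 1" "int m"] by (simp add: exps_E_def)
  show ?thesis
    unfolding Let_def E_floor
    using sub_bergman_eq_product[OF assms(1,2,4,5,6)]
      kernel_product_closed_form[OF assms(2,4) hartogs_H_cnj_mult_bounds[OF assms(5,6,1,2)]]
    by (rule trans)
qed

end
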